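(* Let $p$ and $q$ be distinct primes. Suppose $G$ is a finite non-abelian semi-direct product of a normal abelian Sylow $p$-subgroup $P$ by a cyclic $q$-complement $Q$. Suppose that $P$ is a direct product of cyclic groups of order $p^m$ for some positive integer $m$, that $|G:\mathbf{C}_G(P)|=q$, and that $Q$ acts (by conjugation) non-trivially and irreducibly on $P/P^p$. Then $G$ is exponent-critical.
   Context: A finite group $G$ is exponent-critical if $\exp(G)$ is not the least common multiple of the exponents of the proper non-abelian subgroups of $G$. $P^p$ denotes the subgroup of $P$ generated by the $p$-th powers. *)

theory Defs
  imports "HOL-Algebra.Algebra"
begin

definition group_exponent :: "('a, 'b) monoid_scheme \<Rightarrow> nat" where
  "group_exponent G = Lcm (group.ord G ` carrier G)"

definition exponent_critical :: "('a, 'b) monoid_scheme \<Rightarrow> bool" where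
  "exponent_critical G \<longleftrightarrow>
     group_exponent G \<noteq>
     Lcm {group_exponent (subgroup_generated G H) | H.
            subgroup H G \<and> H \<noteq> carrier G \<and> \<not> comm_group (subgroup_generated G H)}"

definition centralizer :: "('a, 'b) monoid_scheme \<Rightarrow> 'a set \<Rightarrow> 'a set" where
  "centralizer G S = {g \<in> carrier G. \<forall>x\<in>S. g \<otimes>\<^bsub>G\<^esub> x = x \<otimes>\<^bsub>G\<^esub> g}"

definition power_subgroup :: "('a, 'b) monoid_scheme \<Rightarrow> 'a set \<Rightarrow> nat \<Rightarrow> 'a set" where
  "power_subgroup G P p = generate G {x [^]\<^bsub>G\<^esub> p | x. x \<in> P}"

definition conj_invariant :: "('a, 'b) monoid_scheme \<Rightarrow> 'a set \<Rightarrow> 'a set \<Rightarrow> bool" where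
  "conj_invariant G Q H \<longleftrightarrow>
     (\<forall>g\<in>Q. \<forall>h\<in>H. g \<otimes>\<^bsub>G\<^esub> h \<otimes>\<^bsub>G\<^esub> inv\<^bsub>G\<^esub> g \<in> H)"

definition acts_nontrivially_mod_power ::
  "('a, 'b) monoid_scheme \<Rightarrow> 'a set \<Rightarrow> 'a set \<Rightarrow> nat \<Rightarrow> bool" where
  "acts_nontrivially_mod_power G Q P p \<longleftrightarrow>
     (\<exists>g\<in>Q. \<exists>x\<in>P.
        g \<otimes>\<^bsub>G\<^esub> x \<otimes>\<^bsub>G\<^esub> inv\<^bsub>G\<^esub> g \<otimes>\<^bsub>G\<^esub> inv\<^bsub>G\<^esub> x
          \<notin> power_subgroup G P p)"

text \<open>Q acts irreducibly on P/P^p: the Q-invariant subgroups of P/P^p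
  (i.e. Q-invariant subgroups H with P^p \<subseteq> H \<subseteq> P) are only the trivial
  one and the whole quotient.\<close>
definition acts_irreducibly_mod_power ::
  "('a, 'b) monoid_scheme \<Rightarrow> 'a set \<Rightarrow> 'a set \<Rightarrow> nat \<Rightarrow> bool" where
  "acts_irreducibly_mod_power G Q P p \<longleftrightarrow>
     power_subgroup G P p \<noteq> P \<and>
     (\<forall>H. subgroup H G \<and> power_subgroup G P p \<subseteq> H \<and> H \<subseteq> P \<and> conj_invariant G Q H
          \<longrightarrow> H = power_subgroup G P p \<or> H = P)"

definition homocyclic :: "('a, 'b) monoid_scheme \<Rightarrow> 'a set \<Rightarrow> nat \<Rightarrow> nat \<Rightarrow> bool" where
  "homocyclic G P p m \<longleftrightarrow>
     (\<exists>n::nat. subgroup_generated G P \<cong>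
                product_group {..<n} (\<lambda>_. integer_mod_group (p ^ m)))"

end

theory Submission
  imports Defs
begin

(* Let C = C_G(P). Since C = P (Q \<inter> C) is abelian, a proper non-abelian subgroup H
   contains some h \<notin> C; as |G : C| = q is prime, h generates G modulo C, so every element
   of Q acts on P as a power of h. Hence D = H \<inter> P is Q-invariant, and so is P^p D.
   By irreducibility P^p D is P^p or P; in the second case P = P^(p^m) D = D because P is
   abelian of exponent p^m, so H contains P and Q, i.e. H = G. Thus H \<inter> P \<subseteq> P^p,
   so y^|Q| \<in> P^p for every y \<in> H and exp H divides p^(m-1) |Q|, whereas the homocyclic
   group P contains an element of order p^m. *)

context group begin

lemma inv_mult_cancel_left [simp]:
  "x \<in> carrier G \<Longrightarrow> y \<in> carrier G \<Longrightarrow> inv x \<otimes> (x \<otimes> y) = y"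
  by (simp add: m_assoc[symmetric])

lemma mult_inv_cancel_left [simp]:
  "x \<in> carrier G \<Longrightarrow> y \<in> carrier G \<Longrightarrow> x \<otimes> (inv x \<otimes> y) = y"
  by (simp add: m_assoc[symmetric])

lemma subgroup_nat_pow_closed:
  "subgroup H G \<Longrightarrow> h \<in> H \<Longrightarrow> h [^] (n::nat) \<in> H"
  using subgroup_int_pow_closed[of H h "int n"] by (simp add: int_pow_int)

lemma conj_nat_pow:
  assumes "g \<in> carrier G" "y \<in> carrier G"
  shows "g \<otimes> y [^] (n::nat) \<otimes> inv g = (g \<otimes> y \<otimes> inv g) [^] n"
proof (induction n)
  case (Suc n)
  have "g \<otimes> y [^] Suc n \<otimes> inv g = (g \<otimes> y [^] n \<otimes> inv g) \<otimes> (g \<otimes> y \<otimes> inv g)"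
    using assms by (simp add: m_assoc)
  then show ?case
    using Suc by simp
qed (use assms in simp)

lemma pow_coprime_pow_eq:
  assumes x: "x \<in> carrier G" and cop: "coprime i (ord x)"
  obtains e :: nat where "(x [^] i) [^] e = x"
proof (cases "i = 0")
  case True
  then have "x = x [^] ord x"
    using cop x by simp
  then show ?thesis
    using that[of 0] x True by simp
next
  case False
  then obtain e k where "i * e = ord x * k + gcd i (ord x)"
    using bezout_nat by blast
  then have "i * e = ord x * k + 1"
    using cop by simp
  then have "(x [^] i) [^] e = (x [^] ord x) [^] k \<otimes> x"
    using x by (simp add: nat_pow_pow nat_pow_mult del: pow_ord_eq_1)
  then show ?thesis
    using that x by simp
qed

lemma pow_eq_one_cancel_coprime:
  fixes a b n :: nat
  assumes x: "x \<in> carrier G" and "x [^] a = \<one>" and "coprime a n" and "x [^] (b * n) = \<one>"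
  shows "x [^] b = \<one>"
proof -
  have "ord x dvd a" "ord x dvd b * n"
    using assms by (simp_all add: pow_eq_id)
  then have "coprime (ord x) n"
    using \<open>coprime a n\<close> coprime_imp_coprime dvd_trans by blast
  then show ?thesis
    using \<open>ord x dvd b * n\<close> x by (simp add: pow_eq_id coprime_dvd_mult_left_iff)
qed

lemma pow_mult_mem_normal_coset:
  assumes N: "N \<lhd> G" and a: "a \<in> N" and b: "b \<in> carrier G"
  shows "(a \<otimes> b) [^] (n::nat) \<in> N #> b [^] n"
proof -
  interpret normal N G by (fact N)
  have aG: "a \<in> carrier G"
    using a subset by blast
  have "N #> (a \<otimes> b) = N #> b"
    using coset_mult_assoc[of N a b] rcos_const[OF is_group a] aG b subset by simp
  then have "N #> (a \<otimes> b) [^] n = N #> b [^] n"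
    using FactGroup_pow[of "a \<otimes> b" n] FactGroup_pow[of b n] aG b by simp
  then show ?thesis
    using rcos_self[OF _ is_subgroup, of "(a \<otimes> b) [^] n"] aG b by simp
qed

lemma comm_group_subgroup_generated_iff:
  assumes "subgroup H G"
  shows "comm_group (subgroup_generated G H) \<longleftrightarrow> (\<forall>x\<in>H. \<forall>y\<in>H. x \<otimes> y = y \<otimes> x)"
proof -
  have H: "carrier (subgroup_generated G H) = H"
    using assms by (rule subgroup.carrier_subgroup_generated_subgroup)
  show ?thesis
  proof
    assume "comm_group (subgroup_generated G H)"
    then interpret H: comm_group "subgroup_generated G H" .
    show "\<forall>x\<in>H. \<forall>y\<in>H. x \<otimes> y = y \<otimes> x"
      using H.m_comm H by simp
  next
    assume "\<forall>x\<in>H. \<forall>y\<in>H. x \<otimes> y = y \<otimes> x"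
    then show "comm_group (subgroup_generated G H)"
      by (intro group.group_comm_groupI) (simp_all add: H)
  qed
qed

lemma group_exponent_subgroup_dvd:
  assumes "subgroup H G" and "\<And>y. y \<in> H \<Longrightarrow> y [^] M = \<one>"
  shows "group_exponent (subgroup_generated G H) dvd M"
proof -
  interpret H: group "subgroup_generated G H" by simp
  have H: "carrier (subgroup_generated G H) = H"
    using assms(1) by (rule subgroup.carrier_subgroup_generated_subgroup)
  have "H.ord y dvd M" if "y \<in> H" for y
    using H.pow_eq_id[of y M] assms(2)[OF that] that H by (simp add: pow_subgroup_generated)
  then show ?thesis
    unfolding group_exponent_def H by (auto intro: Lcm_least)
qed

lemma cyclic_subgroup_generator:
  assumes Q: "subgroup Q G" and cyc: "cyclic_group (subgroup_generated G Q)"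
  obtains x where "x \<in> Q" "Q = generate G {x}"
proof -
  interpret Q: group "subgroup_generated G Q" by simp
  have carrier: "carrier (subgroup_generated G Q) = Q"
    using Q by (rule subgroup.carrier_subgroup_generated_subgroup)
  obtain x where x: "x \<in> Q" "Q = range (\<lambda>n::int. x [^]\<^bsub>subgroup_generated G Q\<^esub> n)"
    using cyc carrier by (auto simp: Q.cyclic_group)
  then have "Q = range (\<lambda>n::int. x [^] n)"
    using carrier by (simp add: int_pow_subgroup_generated)
  then have "Q = generate G {x}"
    using x(1) Q by (auto simp: generate_pow subgroup.mem_carrier)
  with x(1) that show ?thesis
    by blast
qed

lemma inv_commute:
  assumes "c \<in> carrier G" "x \<in> carrier G" "c \<otimes> x = x \<otimes> c"
  shows "inv c \<otimes> x = x \<otimes> inv c"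
proof -
  have "inv c \<otimes> x = inv c \<otimes> (x \<otimes> c) \<otimes> inv c"
    using assms(1,2) by (simp add: m_assoc)
  also have "\<dots> = x \<otimes> inv c"
    using assms(3)[symmetric] assms(1,2) by simp
  finally show ?thesis .
qed

lemma subgroup_centralizer:
  assumes S: "S \<subseteq> carrier G"
  shows "subgroup (centralizer G S) G"
proof (rule subgroupI)
  show "centralizer G S \<subseteq> carrier G"
    by (auto simp: centralizer_def)
  have "\<one> \<in> centralizer G S"
    using S by (auto simp: centralizer_def)
  then show "centralizer G S \<noteq> {}"
    by blast
next
  fix c assume "c \<in> centralizer G S"
  then show "inv c \<in> centralizer G S"
    using S inv_commute by (auto simp: centralizer_def)
next
  fix c d assume "c \<in> centralizer G S" "d \<in> centralizer G S"
  then have cd: "c \<in> carrier G" "d \<in> carrier G" "\<And>x. x \<in> S \<Longrightarrow> c \<otimes> x = x \<otimes> c"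
      "\<And>x. x \<in> S \<Longrightarrow> d \<otimes> x = x \<otimes> d"
    by (auto simp: centralizer_def)
  have "c \<otimes> d \<otimes> x = x \<otimes> (c \<otimes> d)" if x: "x \<in> S" for x
  proof -
    have "c \<otimes> d \<otimes> x = c \<otimes> (x \<otimes> d)"
      using cd x S by (auto simp: m_assoc)
    also have "\<dots> = x \<otimes> (c \<otimes> d)"
      using cd x S by (auto simp: m_assoc[symmetric])
    finally show ?thesis .
  qed
  then show "c \<otimes> d \<in> centralizer G S"
    using cd by (simp add: centralizer_def)
qed

lemma normal_centralizer:
  assumes N: "N \<lhd> G"
  shows "centralizer G N \<lhd> G"
proof (rule normal_invI)
  interpret normal N G by (fact N)
  show "subgroup (centralizer G N) G"
    using subset by (rule subgroup_centralizer)
  fix g c assume g: "g \<in> carrier G" and "c \<in> centralizer G N"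
  then have c: "c \<in> carrier G" "\<And>x. x \<in> N \<Longrightarrow> c \<otimes> x = x \<otimes> c"
    by (auto simp: centralizer_def)
  have "g \<otimes> c \<otimes> inv g \<otimes> x = x \<otimes> (g \<otimes> c \<otimes> inv g)" if x: "x \<in> N" for x
  proof -
    have xG: "x \<in> carrier G"
      using x subset by blast
    have "inv g \<otimes> x \<otimes> g \<in> N"
      using inv_op_closed1[OF g x] .
    then have "c \<otimes> (inv g \<otimes> x \<otimes> g) = (inv g \<otimes> x \<otimes> g) \<otimes> c"
      by (rule c(2))
    then have "g \<otimes> (c \<otimes> (inv g \<otimes> x \<otimes> g)) \<otimes> inv g = g \<otimes> ((inv g \<otimes> x \<otimes> g) \<otimes> c) \<otimes> inv g"
      by simp
    then show ?thesis
      using g c(1) xG by (simp add: m_assoc)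
  qed
  then show "g \<otimes> c \<otimes> inv g \<in> centralizer G N"
    using g c(1) by (simp add: centralizer_def)
qed

lemma centralizer_mult_conj:
  assumes c: "c \<in> centralizer G S" and g: "g \<in> carrier G" and x: "x \<in> carrier G"
    and "g \<otimes> x \<otimes> inv g \<in> S"
  shows "(c \<otimes> g) \<otimes> x \<otimes> inv (c \<otimes> g) = g \<otimes> x \<otimes> inv g"
proof -
  have cG: "c \<in> carrier G" and comm: "c \<otimes> (g \<otimes> x \<otimes> inv g) = (g \<otimes> x \<otimes> inv g) \<otimes> c"
    using c assms(4) by (auto simp: centralizer_def)
  have "(c \<otimes> g) \<otimes> x \<otimes> inv (c \<otimes> g) = c \<otimes> (g \<otimes> x \<otimes> inv g) \<otimes> inv c"
    using cG g x by (simp add: m_assoc inv_mult_group)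
  also have "\<dots> = g \<otimes> x \<otimes> inv g"
    using comm cG g x by (simp add: m_assoc)
  finally show ?thesis .
qed

lemma power_subgroup_eq_image:
  assumes P: "subgroup P G" and comm: "\<And>x y. x \<in> P \<Longrightarrow> y \<in> P \<Longrightarrow> x \<otimes> y = y \<otimes> x"
  shows "power_subgroup G P n = (\<lambda>y. y [^] n) ` P"
proof
  show "(\<lambda>y. y [^] n) ` P \<subseteq> power_subgroup G P n"
    unfolding power_subgroup_def by (blast intro: generate.incl)
  have PG: "P \<subseteq> carrier G"
    using P by (rule subgroup.subset)
  show "power_subgroup G P n \<subseteq> (\<lambda>y. y [^] n) ` P"
  proof
    fix z assume "z \<in> power_subgroup G P n"
    then show "z \<in> (\<lambda>y. y [^] n) ` P"
      unfolding power_subgroup_def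
    proof (induction z rule: generate.induct)
      case one
      then show ?case
        using subgroup.one_closed[OF P] by (auto intro!: image_eqI[of _ _ \<one>])
    next
      case (incl h)
      then show ?case by blast
    next
      case (inv h)
      then obtain y where "y \<in> P" "h = y [^] n" by blast
      then show ?case
        using PG subgroup.m_inv_closed[OF P] by (auto simp: nat_pow_inv intro!: image_eqI[of _ _ "inv y"])
    next
      case (eng h1 h2)
      then obtain y1 y2 where "y1 \<in> P" "y2 \<in> P" "h1 = y1 [^] n" "h2 = y2 [^] n" by blast
      moreover have "(y1 \<otimes> y2) [^] n = y1 [^] n \<otimes> y2 [^] n"
        using pow_mult_distrib comm calculation PG by blast
      ultimately show ?case
        using subgroup.m_closed[OF P] by (auto intro!: image_eqI[of _ _ "y1 \<otimes> y2"])
    qed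
  qed
qed

lemma power_subgroup_subset:
  assumes "subgroup P G" and "\<And>x y. x \<in> P \<Longrightarrow> y \<in> P \<Longrightarrow> x \<otimes> y = y \<otimes> x"
  shows "power_subgroup G P n \<subseteq> P"
  using power_subgroup_eq_image[OF assms] subgroup_nat_pow_closed[OF assms(1)] by auto

lemma power_subgroup_trivial: "power_subgroup G {\<one>} n = {\<one>}"
  unfolding power_subgroup_def by (simp add: generate_one)

lemma normal_power_subgroup:
  assumes N: "N \<lhd> G" and comm: "\<And>x y. x \<in> N \<Longrightarrow> y \<in> N \<Longrightarrow> x \<otimes> y = y \<otimes> x"
  shows "power_subgroup G N n \<lhd> G"
proof (rule normal_invI)
  interpret normal N G by (fact N)
  show "subgroup (power_subgroup G N n) G"
    unfolding power_subgroup_def using subset by (intro generate_is_subgroup) auto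
  fix g z assume g: "g \<in> carrier G" and "z \<in> power_subgroup G N n"
  then obtain y where y: "y \<in> N" "z = y [^] n"
    using power_subgroup_eq_image[OF is_subgroup comm] by blast
  then have "g \<otimes> z \<otimes> inv g = (g \<otimes> y \<otimes> inv g) [^] n"
    using g subset conj_nat_pow by blast
  moreover have "g \<otimes> y \<otimes> inv g \<in> N"
    using inv_op_closed2[OF g y(1)] .
  ultimately show "g \<otimes> z \<otimes> inv g \<in> power_subgroup G N n"
    using power_subgroup_eq_image[OF is_subgroup comm] by auto
qed

(* Nakayama's lemma for P: iterating P = P^p D gives P = P^(p^m) D = D. *)
lemma subset_if_subset_power_subgroup_mult:
  assumes P: "subgroup P G" and comm: "\<And>x y. x \<in> P \<Longrightarrow> y \<in> P \<Longrightarrow> x \<otimes> y = y \<otimes> x"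
    and D: "subgroup D G" "D \<subseteq> P"
    and cover: "P \<subseteq> power_subgroup G P p <#> D"
    and exp: "\<And>y. y \<in> P \<Longrightarrow> y [^] (p ^ m) = \<one>"
  shows "P \<subseteq> D"
proof -
  have PG: "P \<subseteq> carrier G"
    using P by (rule subgroup.subset)
  have powers: "power_subgroup G P p = (\<lambda>y. y [^] p) ` P"
    using P comm by (rule power_subgroup_eq_image)
  have cover': "\<exists>z\<in>P. \<exists>d\<in>D. y = z [^] p \<otimes> d" if "y \<in> P" for y
    using cover that unfolding powers set_mult_def by blast
  have "\<exists>y\<in>P. \<exists>d\<in>D. x = y [^] (p ^ n) \<otimes> d" if x: "x \<in> P" for x n
  proof (induction n)
    case 0
    have "x = x [^] (p ^ 0) \<otimes> \<one>"
      using x PG by auto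
    then show ?case
      using x subgroup.one_closed[OF D(1)] by blast
  next
    case (Suc n)
    then obtain y d where y: "y \<in> P" "d \<in> D" "x = y [^] (p ^ n) \<otimes> d"
      by blast
    then obtain z d' where z: "z \<in> P" "d' \<in> D" "y = z [^] p \<otimes> d'"
      using cover' by blast
    have G: "z \<in> carrier G" "d \<in> carrier G" "d' \<in> carrier G"
      using y z D PG by (auto dest: subgroup.mem_carrier)
    have "z [^] p \<otimes> d' = d' \<otimes> z [^] p"
      using comm subgroup_nat_pow_closed[OF P z(1)] z(2) D(2) by blast
    then have "y [^] (p ^ n) = (z [^] p) [^] (p ^ n) \<otimes> d' [^] (p ^ n)"
      using pow_mult_distrib G z(3) by simp
    then have "x = z [^] (p ^ Suc n) \<otimes> (d' [^] (p ^ n) \<otimes> d)"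
      using y(3) G by (simp add: nat_pow_pow m_assoc mult.commute)
    moreover have "d' [^] (p ^ n) \<otimes> d \<in> D"
      using subgroup.m_closed[OF D(1) subgroup_nat_pow_closed[OF D(1) z(2)] y(2)] .
    ultimately show ?case
      using z(1) by blast
  qed
  then show ?thesis
    using exp D PG by (metis l_one subgroup.mem_carrier subsetI)
qed

end

lemma (in normal) pow_card_rcosets_mem:
  assumes "finite (carrier G)" and "g \<in> carrier G"
  shows "g [^] card (rcosets H) \<in> H"
proof -
  interpret Q: group "G Mod H" by (rule factorgroup_is_group)
  have "H #> g \<in> carrier (G Mod H)"
    using assms(2) subset by (simp add: FactGroup_def rcosetsI)
  then have "(H #> g) [^]\<^bsub>G Mod H\<^esub> card (rcosets H) = H"
    using Q.pow_order_eq_1 by (simp add: order_def FactGroup_def)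
  then have "H #> g [^] card (rcosets H) = H"
    using assms(2) by (simp add: FactGroup_pow)
  then show ?thesis
    using assms(2) rcos_self[of "g [^] card (rcosets H)" H] is_subgroup by simp
qed

lemma iso_pow_eq_one_iff:
  assumes "\<phi> \<in> iso G H" "group G" "group H" "x \<in> carrier G"
  shows "\<phi> x [^]\<^bsub>H\<^esub> (n::nat) = \<one>\<^bsub>H\<^esub> \<longleftrightarrow> x [^]\<^bsub>G\<^esub> n = \<one>\<^bsub>G\<^esub>"
proof -
  interpret group_hom G H \<phi>
    using assms by (simp add: group_hom_def group_hom_axioms_def iso_def)
  have "inj_on \<phi> (carrier G)"
    using assms(1) by (simp add: iso_def bij_betw_def)
  then show ?thesis
    using assms(4) inj_on_eq_iff[of \<phi> "carrier G" "x [^]\<^bsub>G\<^esub> n" "\<one>\<^bsub>G\<^esub>"]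
    by (simp add: hom_nat_pow)
qed

lemma pow_integer_mod_product:
  assumes "f \<in> carrier (product_group I (\<lambda>_. integer_mod_group N))"
  shows "f [^]\<^bsub>product_group I (\<lambda>_. integer_mod_group N)\<^esub> (k::nat) = (\<lambda>i\<in>I. (int k * f i) mod int N)"
proof (induction k)
  case (Suc k)
  have "(int k * f i mod int N + f i) mod int N = int (Suc k) * f i mod int N" for i
    by (simp add: mod_add_left_eq mod_add_right_eq algebra_simps)
  with Suc show ?case
    using assms by (auto intro!: restrict_ext)
qed simp

lemma pow_integer_mod_product_eq_one_iff:
  assumes "f \<in> carrier (product_group I (\<lambda>_. integer_mod_group N))"
  shows "f [^]\<^bsub>product_group I (\<lambda>_. integer_mod_group N)\<^esub> (k::nat) = \<one>\<^bsub>product_group I (\<lambda>_. integer_mod_group N)\<^esub>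
    \<longleftrightarrow> (\<forall>i\<in>I. int N dvd int k * f i)"
  using assms by (auto simp: pow_integer_mod_product fun_eq_iff dvd_eq_mod_eq_0 simp del: of_nat_mult)

lemma const_one_mem_integer_mod_product:
  assumes "N > 1"
  shows "(\<lambda>i\<in>I. 1) \<in> carrier (product_group I (\<lambda>_. integer_mod_group N))"
proof -
  have "(1::int) \<in> carrier (integer_mod_group N)"
    using assms unfolding carrier_integer_mod_group by auto
  then show ?thesis
    unfolding carrier_product_group restrict_PiE_iff by blast
qed

lemma homocyclic_coordinates:
  fixes G (structure)
  assumes G: "group G" and P: "subgroup P G" and hc: "homocyclic G P p m"
  shows "\<exists>\<phi> n::nat. \<phi> ` P = carrier (product_group {..<n} (\<lambda>_. integer_mod_group (p ^ m)))
    \<and> (\<forall>y\<in>P. \<forall>k::nat. y [^] k = \<one> \<longleftrightarrow> (\<forall>i\<in>{..<n}. int (p ^ m) dvd int k * \<phi> y i))"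
proof -
  interpret group G by (fact G)
  obtain n :: nat where "subgroup_generated G P \<cong> product_group {..<n} (\<lambda>_. integer_mod_group (p ^ m))"
    using hc unfolding homocyclic_def by blast
  then obtain \<phi> where \<phi>: "\<phi> \<in> iso (subgroup_generated G P) (product_group {..<n} (\<lambda>_. integer_mod_group (p ^ m)))"
    unfolding is_iso_def by blast
  have carrier: "carrier (subgroup_generated G P) = P"
    using P by (rule subgroup.carrier_subgroup_generated_subgroup)
  have onto: "\<phi> ` P = carrier (product_group {..<n} (\<lambda>_. integer_mod_group (p ^ m)))"
    using \<phi> carrier by (simp add: iso_def bij_betw_def)
  have pow: "y [^] k = \<one> \<longleftrightarrow> (\<forall>i\<in>{..<n}. int (p ^ m) dvd int k * \<phi> y i)" if y: "y \<in> P" for y k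
  proof -
    have "y [^] k = \<one> \<longleftrightarrow> y [^]\<^bsub>subgroup_generated G P\<^esub> k = \<one>\<^bsub>subgroup_generated G P\<^esub>"
      by (simp add: pow_subgroup_generated)
    also have "\<dots> \<longleftrightarrow> \<phi> y [^]\<^bsub>product_group {..<n} (\<lambda>_. integer_mod_group (p ^ m))\<^esub> k
        = \<one>\<^bsub>product_group {..<n} (\<lambda>_. integer_mod_group (p ^ m))\<^esub>"
      using iso_pow_eq_one_iff[OF \<phi>] y carrier by simp
    also have "\<dots> \<longleftrightarrow> (\<forall>i\<in>{..<n}. int (p ^ m) dvd int k * \<phi> y i)"
    proof -
      have "\<phi> y \<in> carrier (product_group {..<n} (\<lambda>_. integer_mod_group (p ^ m)))"
        using onto y by blast
      from pow_integer_mod_product_eq_one_iff[OF this, of k] show ?thesis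
        by (simp del: of_nat_power one_product_group carrier_product_group)
    qed
    finally show ?thesis .
  qed
  show ?thesis
    using onto pow by (intro exI[of _ \<phi>] exI[of _ n]) simp
qed

lemma homocyclic_pow_eq_one:
  fixes G (structure)
  assumes "group G" "subgroup P G" "homocyclic G P p m" "y \<in> P"
  shows "y [^] (p ^ m) = \<one>"
proof -
  obtain \<phi> and n :: nat
    where "\<phi> ` P = carrier (product_group {..<n} (\<lambda>_. integer_mod_group (p ^ m)))"
      and "\<forall>y\<in>P. \<forall>k::nat. y [^] k = \<one> \<longleftrightarrow> (\<forall>i\<in>{..<n}. int (p ^ m) dvd int k * \<phi> y i)"
    using homocyclic_coordinates[OF assms(1-3)] by blast
  then show ?thesis
    using assms(4) by (simp del: of_nat_power)
qed

lemma prime_power_not_dvd_pred_power: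
  fixes p m :: nat
  assumes "Factorial_Ring.prime p" and "m > 0"
  shows "\<not> p ^ m dvd p ^ (m - 1)"
proof -
  have "p ^ (m - 1) < p ^ m"
    using assms by (intro power_strict_increasing prime_gt_1_nat) simp_all
  then show ?thesis
    using assms(1) by (intro nat_dvd_not_less) (simp_all add: prime_gt_0_nat)
qed

lemma homocyclic_exists_pow_ne_one:
  fixes G (structure)
  assumes G: "group G" and P: "subgroup P G" and hc: "homocyclic G P p m"
    and p: "Factorial_Ring.prime p" and m: "m > 0" and nontriv: "P \<noteq> {\<one>}"
  obtains x where "x \<in> P" "x [^] (p ^ (m - 1)) \<noteq> \<one>"
proof -
  interpret group G by (fact G)
  obtain \<phi> and n :: nat where onto: "\<phi> ` P = carrier (product_group {..<n} (\<lambda>_. integer_mod_group (p ^ m)))"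
    and "\<forall>y\<in>P. \<forall>k::nat. y [^] k = \<one> \<longleftrightarrow> (\<forall>i\<in>{..<n}. int (p ^ m) dvd int k * \<phi> y i)"
    using homocyclic_coordinates[OF G P hc] by blast
  then have pow: "\<And>y k. y \<in> P \<Longrightarrow> y [^] (k::nat) = \<one> \<longleftrightarrow> (\<forall>i\<in>{..<n}. int (p ^ m) dvd int k * \<phi> y i)"
    by blast
  have "n > 0"
  proof (rule ccontr)
    assume "\<not> n > 0"
    then have "y = \<one>" if "y \<in> P" for y
      using pow[OF that, of 1] that P by (simp add: subgroup.mem_carrier)
    then show False
      using nontriv subgroup.one_closed[OF P] by blast
  qed
  have "(\<lambda>i\<in>{..<n}. 1) \<in> \<phi> ` P"
    unfolding onto using one_less_power[OF prime_gt_1_nat[OF p] m]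
    by (rule const_one_mem_integer_mod_product)
  then obtain x where x: "x \<in> P" "(\<lambda>i\<in>{..<n}. 1) = \<phi> x"
    by (rule imageE)
  have "p ^ m dvd p ^ (m - 1)" if "x [^] (p ^ (m - 1)) = \<one>"
  proof -
    have "int (p ^ m) dvd int (p ^ (m - 1)) * \<phi> x 0"
      using pow[OF x(1)] that \<open>n > 0\<close> by blast
    moreover have "\<phi> x 0 = 1"
      using x(2)[symmetric] \<open>n > 0\<close> by simp
    ultimately show ?thesis
      by (metis int_dvd_int_iff mult.right_neutral)
  qed
  then have "x [^] (p ^ (m - 1)) \<noteq> \<one>"
    using prime_power_not_dvd_pred_power[OF p m] by blast
  with x(1) that show ?thesis
    by blast
qed

locale abelian_by_cyclic = group G for G (structure) +
  fixes P Q :: "'a set" and q k :: nat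
  assumes finite_carrier: "finite (carrier G)"
    and P_normal: "P \<lhd> G"
    and P_comm: "\<And>x y. x \<in> P \<Longrightarrow> y \<in> P \<Longrightarrow> x \<otimes> y = y \<otimes> x"
    and Q_subgroup: "subgroup Q G"
    and Q_cyclic: "cyclic_group (subgroup_generated G Q)"
    and Q_card: "card Q = q ^ k"
    and prime_q: "Factorial_Ring.prime q"
    and P_mult_Q: "P <#> Q = carrier G"
    and index_centralizer: "card (rcosets (centralizer G P)) = q"
begin

lemma P_subgroup: "subgroup P G"
  using P_normal by (rule normal_imp_subgroup)

lemma P_carrier: "x \<in> P \<Longrightarrow> x \<in> carrier G"
  using P_subgroup by (rule subgroup.mem_carrier)

lemma Q_carrier: "x \<in> Q \<Longrightarrow> x \<in> carrier G"
  using Q_subgroup by (rule subgroup.mem_carrier)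

lemma Q_comm: "x \<in> Q \<Longrightarrow> y \<in> Q \<Longrightarrow> x \<otimes> y = y \<otimes> x"
  using group.cyclic_imp_abelian_group[OF group_subgroup_generated Q_cyclic]
    comm_group_subgroup_generated_iff[OF Q_subgroup] by blast

lemma centralizer_subgroup: "subgroup (centralizer G P) G"
  using P_carrier by (intro subgroup_centralizer) blast

lemma P_subset_centralizer: "P \<subseteq> centralizer G P"
  using P_comm P_carrier by (auto simp: centralizer_def)

lemma P_Q_decomp:
  assumes "g \<in> carrier G"
  obtains a b where "a \<in> P" "b \<in> Q" "g = a \<otimes> b"
  using assms P_mult_Q unfolding set_mult_def by blast

lemma centralizer_decomp:
  assumes c: "c \<in> centralizer G P"
  obtains a z where "a \<in> P" "z \<in> Q" "z \<in> centralizer G P" "c = a \<otimes> z"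
proof -
  have "c \<in> carrier G"
    using subgroup.mem_carrier[OF centralizer_subgroup c] .
  then obtain a z where az: "a \<in> P" "z \<in> Q" "c = a \<otimes> z"
    by (rule P_Q_decomp)
  then have "z = inv a \<otimes> c"
    using P_carrier Q_carrier by simp
  also have "\<dots> \<in> centralizer G P"
    using az(1) c P_subset_centralizer centralizer_subgroup
    by (blast intro: subgroup.m_closed subgroup.m_inv_closed)
  finally show ?thesis
    using az that by blast
qed

lemma centralizer_comm:
  assumes c: "c \<in> centralizer G P" and d: "d \<in> centralizer G P"
  shows "c \<otimes> d = d \<otimes> c"
proof -
  obtain a1 z1 where 1: "a1 \<in> P" "z1 \<in> Q" "z1 \<in> centralizer G P" "c = a1 \<otimes> z1"
    using c by (rule centralizer_decomp)
  obtain a2 z2 where 2: "a2 \<in> P" "z2 \<in> Q" "z2 \<in> centralizer G P" "d = a2 \<otimes> z2"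
    using d by (rule centralizer_decomp)
  have G: "a1 \<in> carrier G" "z1 \<in> carrier G" "a2 \<in> carrier G" "z2 \<in> carrier G"
    using 1 2 P_carrier Q_carrier by auto
  have z1a2: "z1 \<otimes> a2 = a2 \<otimes> z1" and z2a1: "z2 \<otimes> a1 = a1 \<otimes> z2"
    using 1(1,3) 2(1,3) by (auto simp: centralizer_def)
  have "c \<otimes> d = a1 \<otimes> (z1 \<otimes> a2) \<otimes> z2"
    using 1(4) 2(4) G by (simp add: m_assoc)
  also have "\<dots> = (a1 \<otimes> a2) \<otimes> (z1 \<otimes> z2)"
    using G by (simp add: z1a2 m_assoc)
  also have "\<dots> = (a2 \<otimes> a1) \<otimes> (z2 \<otimes> z1)"
    using P_comm[OF 1(1) 2(1)] Q_comm[OF 1(2) 2(2)] by simp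
  also have "\<dots> = a2 \<otimes> (z2 \<otimes> a1) \<otimes> z1"
    using G by (simp add: z2a1 m_assoc)
  also have "\<dots> = d \<otimes> c"
    using 1(4) 2(4) G by (simp add: m_assoc)
  finally show ?thesis .
qed

lemma pow_q_mem_centralizer: "g \<in> carrier G \<Longrightarrow> g [^] q \<in> centralizer G P"
  using normal.pow_card_rcosets_mem[OF normal_centralizer[OF P_normal] finite_carrier]
  by (simp add: index_centralizer)

lemma Q_powers_of_noncentralizing:
  assumes b: "b \<in> Q" "b \<notin> centralizer G P" and g: "g \<in> Q"
  obtains e :: nat where "g = b [^] e"
proof -
  obtain x where x: "x \<in> Q" "Q = generate G {x}"
    using Q_subgroup Q_cyclic by (rule cyclic_subgroup_generator)
  have xG: "x \<in> carrier G"
    using x(1) by (rule Q_carrier)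
  have powers: "Q = {x [^] n | n::nat. n \<in> UNIV}"
    using x(2) generate_pow_on_finite_carrier[OF finite_carrier xG] by simp
  have ord: "ord x = q ^ k"
    using x(2) generate_pow_card[OF xG] Q_card by simp
  obtain i :: nat where i: "b = x [^] i"
    using b(1) powers by blast
  have "\<not> q dvd i"
  proof
    assume "q dvd i"
    then have "b = (x [^] q) [^] (i div q)"
      using i xG by (simp add: nat_pow_pow)
    moreover have "x [^] q \<in> centralizer G P"
      using xG by (rule pow_q_mem_centralizer)
    ultimately show False
      using b(2) centralizer_subgroup subgroup_nat_pow_closed by metis
  qed
  then have "coprime i q"
    using prime_imp_coprime[OF prime_q] by (simp add: coprime_commute)
  then have "coprime i (ord x)"
    by (simp add: ord)
  then obtain e :: nat where "(x [^] i) [^] e = x"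
    by (rule pow_coprime_pow_eq[OF xG])
  moreover obtain t :: nat where "g = x [^] t"
    using g powers by blast
  ultimately have "g = (b [^] e) [^] t"
    using i by simp
  then have "g = b [^] (e * t)"
    using b(1) Q_carrier by (simp add: nat_pow_pow)
  then show ?thesis
    by (rule that)
qed

lemma noncentralizing_decomp:
  assumes "h \<in> carrier G" "h \<notin> centralizer G P"
  obtains a b where "a \<in> P" "b \<in> Q" "h = a \<otimes> b" "b \<notin> centralizer G P"
proof -
  obtain a b where ab: "a \<in> P" "b \<in> Q" "h = a \<otimes> b"
    using assms(1) by (rule P_Q_decomp)
  have "b \<notin> centralizer G P"
  proof
    assume "b \<in> centralizer G P"
    then have "a \<otimes> b \<in> centralizer G P"
      using ab(1) P_subset_centralizer centralizer_subgroup by (blast intro: subgroup.m_closed)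
    then show False
      using ab(3) assms(2) by simp
  qed
  with ab that show ?thesis
    by blast
qed

lemma conj_Q_eq_conj_pow:
  assumes h: "h \<in> carrier G" "h \<notin> centralizer G P" and g: "g \<in> Q"
  shows "\<exists>e::nat. \<forall>x\<in>P. g \<otimes> x \<otimes> inv g = h [^] e \<otimes> x \<otimes> inv (h [^] e)"
proof -
  obtain a b where ab: "a \<in> P" "b \<in> Q" "h = a \<otimes> b" "b \<notin> centralizer G P"
    using h by (rule noncentralizing_decomp)
  obtain e :: nat where e: "g = b [^] e"
    using ab(2,4) g by (rule Q_powers_of_noncentralizing)
  have bG: "b \<in> carrier G"
    using ab(2) by (rule Q_carrier)
  have "h [^] e \<in> P #> b [^] e"
    unfolding ab(3) using P_normal ab(1) bG by (rule pow_mult_mem_normal_coset)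
  then obtain a' where a': "a' \<in> P" "h [^] e = a' \<otimes> b [^] e"
    unfolding r_coset_def by blast
  have "h [^] e \<otimes> x \<otimes> inv (h [^] e) = g \<otimes> x \<otimes> inv g" if x: "x \<in> P" for x
    unfolding a'(2) e
  proof (rule centralizer_mult_conj)
    show "a' \<in> centralizer G P"
      using a'(1) P_subset_centralizer by blast
    show "b [^] e \<otimes> x \<otimes> inv (b [^] e) \<in> P"
      using normal.inv_op_closed2[OF P_normal _ x] bG by simp
  qed (use bG x P_carrier in auto)
  then show ?thesis
    by metis
qed

lemma inter_P_conj_closed:
  assumes H: "subgroup H G" and h: "h \<in> H" "h \<notin> centralizer G P"
    and g: "g \<in> Q" and d: "d \<in> H \<inter> P"
  shows "g \<otimes> d \<otimes> inv g \<in> H \<inter> P"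
proof -
  have hG: "h \<in> carrier G"
    using subgroup.mem_carrier[OF H h(1)] .
  obtain e :: nat where e: "\<forall>x\<in>P. g \<otimes> x \<otimes> inv g = h [^] e \<otimes> x \<otimes> inv (h [^] e)"
    using conj_Q_eq_conj_pow[OF hG h(2) g] by blast
  have "h [^] e \<in> H"
    using H h(1) by (rule subgroup_nat_pow_closed)
  then have "h [^] e \<otimes> d \<otimes> inv (h [^] e) \<in> H"
    using H d by (blast intro: subgroup.m_closed subgroup.m_inv_closed)
  moreover have "g \<otimes> d \<otimes> inv g \<in> P"
    using normal.inv_op_closed2[OF P_normal Q_carrier[OF g]] d by blast
  ultimately show ?thesis
    using e d by simp
qed

lemma subgroup_eq_carrier_if_P_subset:
  assumes H: "subgroup H G" and PH: "P \<subseteq> H" and h: "h \<in> H" "h \<notin> centralizer G P"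
  shows "H = carrier G"
proof -
  have hG: "h \<in> carrier G"
    using subgroup.mem_carrier[OF H h(1)] .
  obtain a b where ab: "a \<in> P" "b \<in> Q" "h = a \<otimes> b" "b \<notin> centralizer G P"
    using hG h(2) by (rule noncentralizing_decomp)
  have "b = inv a \<otimes> h"
    using ab P_carrier Q_carrier by simp
  then have bH: "b \<in> H"
    using ab(1) PH H h(1) by (blast intro: subgroup.m_closed subgroup.m_inv_closed)
  have "Q \<subseteq> H"
  proof
    fix g assume "g \<in> Q"
    then obtain e :: nat where "g = b [^] e"
      using ab(2,4) by (metis Q_powers_of_noncentralizing)
    then show "g \<in> H"
      using H bH by (simp add: subgroup_nat_pow_closed)
  qed
  have "carrier G \<subseteq> H"
  proof
    fix g assume "g \<in> carrier G"
    then obtain a b where "a \<in> P" "b \<in> Q" "g = a \<otimes> b"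
      by (rule P_Q_decomp)
    then show "g \<in> H"
      using PH \<open>Q \<subseteq> H\<close> subgroup.m_closed[OF H] by blast
  qed
  then show ?thesis
    using subgroup.subset[OF H] by blast
qed

lemma irreducible_mod_power_dichotomy:
  assumes irr: "acts_irreducibly_mod_power G Q P p"
    and D: "subgroup D G" "D \<subseteq> P" and D_inv: "\<And>g d. g \<in> Q \<Longrightarrow> d \<in> D \<Longrightarrow> g \<otimes> d \<otimes> inv g \<in> D"
  shows "D \<subseteq> power_subgroup G P p \<or> P \<subseteq> power_subgroup G P p <#> D"
proof -
  define K where "K = power_subgroup G P p <#> D"
  have powers_normal: "power_subgroup G P p \<lhd> G"
    using P_normal P_comm by (rule normal_power_subgroup)
  interpret second_isomorphism_grp "power_subgroup G P p" G D
    using powers_normal D(1) by (simp add: second_isomorphism_grp_def second_isomorphism_grp_axioms_def)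
  have powers_P: "power_subgroup G P p \<subseteq> P"
    using P_subgroup P_comm by (rule power_subgroup_subset)
  have K_P: "K \<subseteq> P"
    unfolding K_def set_mult_def using powers_P D(2) subgroup.m_closed[OF P_subgroup] by blast
  have "conj_invariant G Q K"
    unfolding conj_invariant_def
  proof (intro ballI)
    fix g z assume g: "g \<in> Q" and "z \<in> K"
    then obtain y d where yd: "y \<in> power_subgroup G P p" "d \<in> D" "z = y \<otimes> d"
      unfolding K_def set_mult_def by blast
    have G: "g \<in> carrier G" "y \<in> carrier G" "d \<in> carrier G"
      using g yd(1,2) powers_P D(2) Q_carrier P_carrier by auto
    have "g \<otimes> z \<otimes> inv g = (g \<otimes> y \<otimes> inv g) \<otimes> (g \<otimes> d \<otimes> inv g)"
      using yd(3) G by (simp add: m_assoc)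
    moreover have "g \<otimes> y \<otimes> inv g \<in> power_subgroup G P p"
      using normal.inv_op_closed2[OF powers_normal G(1) yd(1)] .
    moreover have "g \<otimes> d \<otimes> inv g \<in> D"
      using D_inv g yd(2) .
    ultimately show "g \<otimes> z \<otimes> inv g \<in> K"
      unfolding K_def set_mult_def by blast
  qed
  then have "K = power_subgroup G P p \<or> K = P"
    using irr normal_set_mult_subgroup H_contained_in_set_mult K_P
    unfolding acts_irreducibly_mod_power_def K_def by blast
  then show ?thesis
    using S_contained_in_set_mult unfolding K_def by blast
qed

lemma noncomm_subgroup_inter_P_subset:
  assumes irr: "acts_irreducibly_mod_power G Q P p"
    and exp: "\<And>y. y \<in> P \<Longrightarrow> y [^] (p ^ m) = \<one>"
    and H: "subgroup H G" "H \<noteq> carrier G" "\<not> comm_group (subgroup_generated G H)"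
  shows "H \<inter> P \<subseteq> power_subgroup G P p"
proof -
  have "\<not> H \<subseteq> centralizer G P"
    using H(3) centralizer_comm comm_group_subgroup_generated_iff[OF H(1)] by blast
  then obtain h where h: "h \<in> H" "h \<notin> centralizer G P"
    by blast
  have D: "subgroup (H \<inter> P) G" "H \<inter> P \<subseteq> P"
    using subgroups_Inter_pair[OF H(1) P_subgroup] by auto
  have "P \<subseteq> H"
    if "P \<subseteq> power_subgroup G P p <#> (H \<inter> P)"
    using subset_if_subset_power_subgroup_mult[OF P_subgroup P_comm D that exp] by blast
  then show ?thesis
    using irreducible_mod_power_dichotomy[OF irr D inter_P_conj_closed[OF H(1) h]]
      subgroup_eq_carrier_if_P_subset[OF H(1) _ h] H(2) by blast
qed

lemma pow_card_Q_mem_P: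
  assumes "y \<in> carrier G"
  shows "y [^] card Q \<in> P"
proof -
  obtain a b where ab: "a \<in> P" "b \<in> Q" "y = a \<otimes> b"
    using assms by (rule P_Q_decomp)
  interpret Q: group "subgroup_generated G Q" by simp
  have "b [^]\<^bsub>subgroup_generated G Q\<^esub> order (subgroup_generated G Q) = \<one>\<^bsub>subgroup_generated G Q\<^esub>"
    using Q.pow_order_eq_1 ab(2) subgroup.carrier_subgroup_generated_subgroup[OF Q_subgroup] by simp
  then have "b [^] card Q = \<one>"
    using subgroup.carrier_subgroup_generated_subgroup[OF Q_subgroup]
    by (simp add: order_def pow_subgroup_generated)
  moreover have "y [^] card Q \<in> P #> b [^] card Q"
    unfolding ab(3) using P_normal ab(1) Q_carrier[OF ab(2)] by (rule pow_mult_mem_normal_coset)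
  ultimately show ?thesis
    using P_carrier by (simp add: coset_mult_one subsetI)
qed

lemma exponent_noncomm_subgroup_dvd:
  assumes irr: "acts_irreducibly_mod_power G Q P p"
    and exp: "\<And>y. y \<in> P \<Longrightarrow> y [^] (p ^ m) = \<one>" and m: "m > 0"
    and H: "subgroup H G" "H \<noteq> carrier G" "\<not> comm_group (subgroup_generated G H)"
  shows "group_exponent (subgroup_generated G H) dvd p ^ (m - 1) * card Q"
proof (rule group_exponent_subgroup_dvd[OF H(1)])
  fix y assume y: "y \<in> H"
  have yG: "y \<in> carrier G"
    using subgroup.mem_carrier[OF H(1) y] .
  have "y [^] card Q \<in> H \<inter> P"
    using subgroup_nat_pow_closed[OF H(1) y] pow_card_Q_mem_P[OF yG] by blast
  then have "y [^] card Q \<in> power_subgroup G P p"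
    using noncomm_subgroup_inter_P_subset[OF irr exp H] by blast
  then obtain w where w: "w \<in> P" "y [^] card Q = w [^] p"
    using power_subgroup_eq_image[OF P_subgroup P_comm] by blast
  have "p * p ^ (m - 1) = p ^ m"
    using m by (simp add: power_eq_if)
  have "y [^] (p ^ (m - 1) * card Q) = (y [^] card Q) [^] p ^ (m - 1)"
    using yG by (simp add: nat_pow_pow mult.commute)
  also have "\<dots> = w [^] (p ^ m)"
    using P_carrier[OF w(1)] w(2) \<open>p * p ^ (m - 1) = p ^ m\<close> by (simp add: nat_pow_pow)
  finally have "y [^] (p ^ (m - 1) * card Q) = w [^] (p ^ m)" .
  then show "y [^] (p ^ (m - 1) * card Q) = \<one>"
    using exp[OF w(1)] by simp
qed

end

theorem mainTheorem8:
  fixes G (structure) and P Q :: "'a set" and p q m :: nat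
  assumes "group G" and "finite (carrier G)"
    and "Factorial_Ring.prime p" and "Factorial_Ring.prime q" and "p \<noteq> q"
    and "\<not> comm_group G"
    and "P \<lhd> G"
    and "card P = p ^ multiplicity p (order G)"
    and "comm_group (subgroup_generated G P)"
    and "subgroup Q G"
    and "cyclic_group (subgroup_generated G Q)"
    and "\<exists>k. card Q = q ^ k"
    and "P \<inter> Q = {\<one>}"
    and "P <#> Q = carrier G"
    and "m > 0"
    and "homocyclic G P p m"
    and "card (rcosets (centralizer G P)) = q"
    and "acts_nontrivially_mod_power G Q P p"
    and "acts_irreducibly_mod_power G Q P p"
  shows "exponent_critical G"
proof -
  interpret group G by fact
  obtain k where "card Q = q ^ k"
    using assms(12) by blast
  have "\<And>x y. x \<in> P \<Longrightarrow> y \<in> P \<Longrightarrow> x \<otimes> y = y \<otimes> x"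
    using comm_group_subgroup_generated_iff[OF normal_imp_subgroup[OF assms(7)]] assms(9) by blast
  from abelian_by_cyclic_axioms.intro[OF assms(2,7) this assms(10,11) \<open>card Q = q ^ k\<close> assms(4,14,17)]
  interpret abelian_by_cyclic G P Q q k
    by (intro abelian_by_cyclic.intro assms(1))
  have exp: "\<And>y. y \<in> P \<Longrightarrow> y [^] (p ^ m) = \<one>"
    using homocyclic_pow_eq_one[OF assms(1) P_subgroup assms(16)] .
  have "P \<noteq> {\<one>}"
    using assms(19) power_subgroup_trivial unfolding acts_irreducibly_mod_power_def by metis
  then obtain x where x: "x \<in> P" "x [^] (p ^ (m - 1)) \<noteq> \<one>"
    using homocyclic_exists_pow_ne_one[OF assms(1) P_subgroup assms(16,3,15)] by blast
  have "coprime (p ^ m) (card Q)"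
    using primes_coprime[OF assms(3,4,5)] \<open>card Q = q ^ k\<close> by simp
  then have "\<not> ord x dvd p ^ (m - 1) * card Q"
    using pow_eq_one_cancel_coprime[OF P_carrier[OF x(1)] exp[OF x(1)]] x(2)
      pow_eq_id[OF P_carrier[OF x(1)]] by blast
  moreover have "ord x dvd group_exponent G"
    unfolding group_exponent_def using P_carrier[OF x(1)] by (simp add: dvd_Lcm)
  moreover have "Lcm {group_exponent (subgroup_generated G H) | H. subgroup H G \<and>
      H \<noteq> carrier G \<and> \<not> comm_group (subgroup_generated G H)} dvd p ^ (m - 1) * card Q"
    using exponent_noncomm_subgroup_dvd[OF assms(19) exp assms(15)] by (auto intro: Lcm_least)
  ultimately show ?thesis
    unfolding exponent_critical_def by (metis dvd_trans)
qed

end
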